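(* Let $M$ be a holomorphic hypersurface of a Kähler manifold with Norden metric $(M',g,J)$ of dimension $2n+2$, and let $p\in M$. If there exists a nonzero vector $\eta$ normal to $M$ at $p$ such that $$A_\eta=\frac{\operatorname{trace}A_\eta}{2n}\,I-\frac{\operatorname{trace}(A_\eta\circ J)}{2n}\,J,$$ then $\sigma(x,y)=g(x,y)H-\tilde g(x,y)JH$ for all $x,y\in T_pM$.
   Context: A Kähler manifold with Norden metric: manifold $M'$ with almost complex structure $J$, pseudo-Riemannian metric $g$ with $g(JX,JY)=-g(X,Y)$ and $\nabla'J=0$; $\tilde g(X,Y)=g(JX,Y)$. A holomorphic hypersurface is a $2n$-dimensional submanifold $M$ with $J(T_pM)=T_pM$ and $g|_{T_pM}$ nondegenerate, with induced Levi-Civita connection $\nabla$; its second fundamental form $\sigma$ is defined by $\nabla'_XY=\nabla_XY+\sigma(X,Y)$ and its mean curvature vector is $H=\frac1{2n}\operatorname{trace}_g\sigma$. For a vector $\eta$ normal to $M$ at $p$, $A_\eta$ is the endomorphism of $T_pM$ with $g(A_\eta x,y)=g(\sigma(x,y),\eta)$; $I$ is the identity. *)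

theory Defs
  imports "HOL-Analysis.Analysis"
begin

text \<open>The tangent space of the ambient
Kaehler manifold with Norden metric at p is a real vector space V of dimension
2n+2 (a type of class euclidean_space, only its real vector space structure is
used), with the metric g and the almost complex structure J at p.  T_pM is a
subspace W of V.\<close>

definition norden_space :: "('v::real_vector \<Rightarrow> 'v \<Rightarrow> real) \<Rightarrow> ('v \<Rightarrow> 'v) \<Rightarrow> bool" where
  "norden_space g J \<longleftrightarrow>
     bilinear g \<and> (\<forall>x y. g x y = g y x) \<and> (\<forall>x. (\<forall>y. g x y = 0) \<longrightarrow> x = 0) \<and>
     linear J \<and> (\<forall>x. J (J x) = - x) \<and> (\<forall>x y. g (J x) (J y) = - g x y)"

definition assoc_metric :: "('v \<Rightarrow> 'v \<Rightarrow> real) \<Rightarrow> ('v \<Rightarrow> 'v) \<Rightarrow> 'v \<Rightarrow> 'v \<Rightarrow> real" where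
  "assoc_metric g J x y = g (J x) y"

definition holomorphic_nondeg_subspace ::
  "('v::real_vector \<Rightarrow> 'v \<Rightarrow> real) \<Rightarrow> ('v \<Rightarrow> 'v) \<Rightarrow> 'v set \<Rightarrow> bool" where
  "holomorphic_nondeg_subspace g J W \<longleftrightarrow>
     subspace W \<and> J ` W = W \<and> (\<forall>x\<in>W. (\<forall>y\<in>W. g x y = 0) \<longrightarrow> x = 0)"

definition normal_to :: "('v \<Rightarrow> 'v \<Rightarrow> real) \<Rightarrow> 'v set \<Rightarrow> 'v \<Rightarrow> bool" where
  "normal_to g W \<eta> \<longleftrightarrow> (\<forall>x\<in>W. g \<eta> x = 0)"

definition bilinear_on :: "'v::real_vector set \<Rightarrow> ('v \<Rightarrow> 'v \<Rightarrow> 'w::real_vector) \<Rightarrow> bool" where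
  "bilinear_on W f \<longleftrightarrow>
     (\<forall>x\<in>W. \<forall>y\<in>W. \<forall>z\<in>W. \<forall>a b. f (a *\<^sub>R x + b *\<^sub>R y) z = a *\<^sub>R f x z + b *\<^sub>R f y z
                                 \<and> f z (a *\<^sub>R x + b *\<^sub>R y) = a *\<^sub>R f z x + b *\<^sub>R f z y)"

text \<open>Second fundamental form at p: a symmetric bilinear map on T_pM with values
in the normal space, satisfying sigma(x,Jy) = J sigma(x,y) (which is what the
Kaehler condition nabla' J = 0 together with the Gauss formula give for a
holomorphic submanifold).\<close>
definition second_fundamental_form ::
  "('v::real_vector \<Rightarrow> 'v \<Rightarrow> real) \<Rightarrow> ('v \<Rightarrow> 'v) \<Rightarrow> 'v set \<Rightarrow> ('v \<Rightarrow> 'v \<Rightarrow> 'v) \<Rightarrow> bool" where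
  "second_fundamental_form g J W \<sigma> \<longleftrightarrow>
     bilinear_on W \<sigma> \<and> (\<forall>x\<in>W. \<forall>y\<in>W. \<sigma> x y = \<sigma> y x) \<and>
     (\<forall>x\<in>W. \<forall>y\<in>W. normal_to g W (\<sigma> x y)) \<and>
     (\<forall>x\<in>W. \<forall>y\<in>W. \<sigma> x (J y) = J (\<sigma> x y))"

definition trace_on :: "'v::real_vector set \<Rightarrow> ('v \<Rightarrow> 'v) \<Rightarrow> real" where
  "trace_on W f = (let B = (SOME B. B \<subseteq> W \<and> independent B \<and> span B = W)
                   in (\<Sum>b\<in>B. representation B (f b) b))"

definition pseudo_orthonormal_basis ::
  "('v::real_vector \<Rightarrow> 'v \<Rightarrow> real) \<Rightarrow> 'v set \<Rightarrow> (nat \<Rightarrow> 'v) \<Rightarrow> bool" where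
  "pseudo_orthonormal_basis g W e \<longleftrightarrow>
     (\<forall>i<dim W. e i \<in> W) \<and> span (e ` {..<dim W}) = W \<and>
     (\<forall>i<dim W. \<forall>j<dim W. i \<noteq> j \<longrightarrow> g (e i) (e j) = 0) \<and>
     (\<forall>i<dim W. g (e i) (e i) = 1 \<or> g (e i) (e i) = -1)"

text \<open>trace_g of a vector-valued bilinear form B on W:
  sum_i eps_i B(e_i,e_i) with eps_i = g(e_i,e_i) = 1/g(e_i,e_i).\<close>
definition trace_g :: "('v::real_vector \<Rightarrow> 'v \<Rightarrow> real) \<Rightarrow> 'v set \<Rightarrow> ('v \<Rightarrow> 'v \<Rightarrow> 'w::real_vector) \<Rightarrow> 'w" where
  "trace_g g W B = (let e = (SOME e. pseudo_orthonormal_basis g W e)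
                    in (\<Sum>i<dim W. g (e i) (e i) *\<^sub>R B (e i) (e i)))"

text \<open>Mean curvature vector H = (1/2n) trace_g sigma, where 2n = dim W.\<close>
definition mean_curvature :: "('v::real_vector \<Rightarrow> 'v \<Rightarrow> real) \<Rightarrow> 'v set \<Rightarrow> ('v \<Rightarrow> 'v \<Rightarrow> 'v) \<Rightarrow> 'v" where
  "mean_curvature g W \<sigma> = (1 / real (dim W)) *\<^sub>R trace_g g W \<sigma>"

definition shape_operator ::
  "('v \<Rightarrow> 'v \<Rightarrow> real) \<Rightarrow> 'v set \<Rightarrow> ('v \<Rightarrow> 'v \<Rightarrow> 'v) \<Rightarrow> 'v \<Rightarrow> 'v \<Rightarrow> 'v" where
  "shape_operator g W \<sigma> \<eta> x = (THE z. z \<in> W \<and> (\<forall>y\<in>W. g z y = g (\<sigma> x y) \<eta>))"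

end

theory Submission
  imports Defs
begin

text \<open>By the hypothesis on \<open>A\<^sub>\<eta>\<close>, \<open>g(\<sigma>(x,y), \<eta>) = \<alpha> g(x,y) - \<beta> g(Jx,y)\<close>, and since
\<open>\<sigma>(x,Jy) = J\<sigma>(x,y)\<close> also \<open>g(\<sigma>(x,y), J\<eta>) = \<alpha> g(Jx,y) + \<beta> g(x,y)\<close>; the actual
values of \<open>\<alpha>\<close> and \<open>\<beta>\<close> play no role. The normal space is two-dimensional and
spanned by \<open>\<eta>\<close> and \<open>J\<eta>\<close>, so a normal vector is determined by its pairings with
\<open>\<eta>\<close> and \<open>J\<eta>\<close>. Comparing pairings gives \<open>\<sigma>(x,y) = g(x,y) Z - g(Jx,y) JZ\<close> with
\<open>Z = \<sigma>(u,u)\<close> for any \<open>u\<close> with \<open>g(u,u) = 1\<close> and \<open>g(u,Ju) = 0\<close>. Taking the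
\<open>g\<close>-trace yields \<open>H = Z\<close>, because \<open>\<Sum>\<^sub>i \<epsilon>\<^sub>i g(Je\<^sub>i,e\<^sub>i)\<close> does not depend on the
pseudo-orthonormal basis and vanishes for a basis \<open>u\<^sub>1, Ju\<^sub>1, \<dots>, u\<^sub>n, Ju\<^sub>n\<close>.\<close>

definition nondegenerate_on :: "('v::zero \<Rightarrow> 'v \<Rightarrow> real) \<Rightarrow> 'v set \<Rightarrow> bool" where
  "nondegenerate_on g U \<longleftrightarrow> (\<forall>x\<in>U. (\<forall>y\<in>U. g x y = 0) \<longrightarrow> x = 0)"

locale norden =
  fixes g :: "'v::euclidean_space \<Rightarrow> 'v \<Rightarrow> real" and J :: "'v \<Rightarrow> 'v"
  assumes norden_space: "norden_space g J"
begin

lemma bilinear_g: "bilinear g"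
  using norden_space by (simp add: norden_space_def)

lemma g_sym: "g x y = g y x"
  using norden_space by (simp add: norden_space_def)

lemma g_nondegenerate: "(\<And>y. g x y = 0) \<Longrightarrow> x = 0"
  using norden_space by (auto simp: norden_space_def)

lemma linear_J: "linear J"
  using norden_space by (simp add: norden_space_def)

lemma J_J [simp]: "J (J x) = - x"
  using norden_space by (simp add: norden_space_def)

lemma g_J_J [simp]: "g (J x) (J y) = - g x y"
  using norden_space by (simp add: norden_space_def)

lemma linear_g: "linear (g x)"
  using bilinear_g by (simp add: bilinear_def)

lemma g_add_left [simp]: "g (x + y) z = g x z + g y z" by (rule bilinear_ladd[OF bilinear_g])
lemma g_add_right [simp]: "g x (y + z) = g x y + g x z" by (rule bilinear_radd[OF bilinear_g])
lemma g_scale_left [simp]: "g (c *\<^sub>R x) y = c * g x y" using bilinear_lmul[OF bilinear_g] by simp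
lemma g_scale_right [simp]: "g x (c *\<^sub>R y) = c * g x y" using bilinear_rmul[OF bilinear_g] by simp
lemma g_diff_left [simp]: "g (x - y) z = g x z - g y z" by (rule bilinear_lsub[OF bilinear_g])
lemma g_diff_right [simp]: "g x (y - z) = g x y - g x z" by (rule bilinear_rsub[OF bilinear_g])
lemma g_minus_left [simp]: "g (- x) y = - g x y" by (rule bilinear_lneg[OF bilinear_g])
lemma g_minus_right [simp]: "g x (- y) = - g x y" by (rule bilinear_rneg[OF bilinear_g])
lemma g_zero_left [simp]: "g 0 y = 0" by (rule bilinear_lzero[OF bilinear_g])
lemma g_zero_right [simp]: "g x 0 = 0" by (rule bilinear_rzero[OF bilinear_g])

lemma g_sum_left: "g (sum f S) y = (\<Sum>i\<in>S. g (f i) y)"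
proof -
  have "linear (\<lambda>x. g x y)" using bilinear_g by (simp add: bilinear_def)
  from linear_sum[OF this, of f S] show ?thesis by (simp add: o_def)
qed

lemma J_add [simp]: "J (x + y) = J x + J y" using linear_J by (rule linear_add)
lemma J_scale [simp]: "J (c *\<^sub>R x) = c *\<^sub>R J x" using linear_J by (rule linear_scale)
lemma J_diff [simp]: "J (x - y) = J x - J y" using linear_J by (rule linear_diff)
lemma J_minus [simp]: "J (- x) = - J x" using linear_J by (rule linear_neg)
lemma J_zero [simp]: "J 0 = 0" using linear_J by (rule linear_0)

lemma g_J_swap: "g (J x) y = g x (J y)"
  using g_J_J[of "J x" y] by simp

lemma holomorphic_nondeg_subspace_iff:
  "holomorphic_nondeg_subspace g J U \<longleftrightarrow>
     subspace U \<and> (\<forall>x\<in>U. J x \<in> U) \<and> nondegenerate_on g U"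
proof -
  have "J ` U = U" if "subspace U" "\<forall>x\<in>U. J x \<in> U"
  proof
    show "U \<subseteq> J ` U"
    proof
      fix x assume "x \<in> U"
      then have "- J x \<in> U" using that by (simp add: subspace_neg)
      moreover have "x = J (- J x)" by simp
      ultimately show "x \<in> J ` U" by blast
    qed
  qed (use that in auto)
  then show ?thesis
    unfolding holomorphic_nondeg_subspace_def nondegenerate_on_def by blast
qed

lemma null_subspace_trivial:
  assumes U: "subspace U" and nd: "nondegenerate_on g U" and null: "\<forall>x\<in>U. g x x = 0"
  shows "U \<subseteq> {0}"
proof
  fix u assume u: "u \<in> U"
  have "g u y = 0" if y: "y \<in> U" for y
  proof -
    have "u + y \<in> U" using U u y by (simp add: subspace_add)
    then have "g (u + y) (u + y) = 0" using null by blast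
    moreover have "g (u + y) (u + y) = g u u + g u y + g y u + g y y" by simp
    moreover have "g u u = 0" "g y y = 0" using null u y by auto
    ultimately show ?thesis using g_sym[of y u] by linarith
  qed
  then show "u \<in> {0}" using nd u unfolding nondegenerate_on_def by auto
qed

lemma exists_J_unit_vector:
  assumes U: "holomorphic_nondeg_subspace g J U" and nontrivial: "U \<noteq> {0}"
  obtains u where "u \<in> U" "g u u = 1" "g u (J u) = 0"
proof -
  have sub: "subspace U" and JU: "\<forall>x\<in>U. J x \<in> U" and nd: "nondegenerate_on g U"
    using U by (auto simp: holomorphic_nondeg_subspace_iff)
  obtain x where x: "x \<in> U" "g x x \<noteq> 0"
    using null_subspace_trivial[OF sub nd] nontrivial subspace_0[OF sub] by blast
  txt \<open>\<open>U\<close> is a complex vector space with \<open>i\<close> acting as \<open>J\<close>, and \<open>g(x,x) + i g(x,Jx)\<close>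
    is complex bilinear in \<open>x\<close>; so rescale \<open>x\<close> by an inverse square root of it.\<close>
  define q where "q = Complex (g x x) (g x (J x))"
  have "q \<noteq> 0" using x(2) by (simp add: q_def complex_eq_iff)
  define w where "w = 1 / csqrt q"
  have "w^2 * q = 1"
    using power2_csqrt[of q] \<open>q \<noteq> 0\<close> by (auto simp: w_def power_divide)
  then have "Re (w^2 * q) = 1" "Im (w^2 * q) = 0" by auto
  then have e1: "(Re w^2 - Im w^2) * g x x - 2 * Re w * Im w * g x (J x) = 1"
    and e2: "(Re w^2 - Im w^2) * g x (J x) + 2 * Re w * Im w * g x x = 0"
    by (simp_all add: q_def power2_eq_square algebra_simps)
  define u where "u = Re w *\<^sub>R x - Im w *\<^sub>R J x"
  have "u \<in> U" using sub x(1) JU by (simp add: u_def subspace_diff subspace_scale)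
  moreover have "g u u = 1"
    using e1 by (simp add: u_def g_sym[of "J x" x] algebra_simps power2_eq_square)
  moreover have "g u (J u) = 0"
    using e2 by (simp add: u_def g_sym[of "J x" x] algebra_simps power2_eq_square)
  ultimately show ?thesis by (rule that)
qed

lemma J_orthogonal_complement:
  assumes U: "holomorphic_nondeg_subspace g J U"
    and u: "u \<in> U" "g u u = 1" "g u (J u) = 0"
  defines "U' \<equiv> {y\<in>U. g y u = 0 \<and> g y (J u) = 0}"
  shows "holomorphic_nondeg_subspace g J U'"
    and "\<And>x. x \<in> U \<Longrightarrow> x - g x u *\<^sub>R u + g x (J u) *\<^sub>R J u \<in> U'"
    and "dim U' < dim U"
proof -
  have sub: "subspace U" and JU: "\<forall>x\<in>U. J x \<in> U" and nd: "nondegenerate_on g U"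
    using U by (auto simp: holomorphic_nondeg_subspace_iff)
  have Ju: "J u \<in> U" using JU u(1) by blast
  have sub': "subspace U'" using sub unfolding U'_def subspace_def by auto
  show proj: "x - g x u *\<^sub>R u + g x (J u) *\<^sub>R J u \<in> U'" if x: "x \<in> U" for x
    using x sub u Ju g_sym[of "J u" u]
    by (auto simp: U'_def subspace_add subspace_diff subspace_scale)
  have "nondegenerate_on g U'"
    unfolding nondegenerate_on_def
  proof (intro ballI impI)
    fix y assume y: "y \<in> U'" and null: "\<forall>z\<in>U'. g y z = 0"
    have "g y x = 0" if x: "x \<in> U" for x
    proof -
      have "g y (x - g x u *\<^sub>R u + g x (J u) *\<^sub>R J u) = 0" using null proj[OF x] by blast
      then show ?thesis using y by (simp add: U'_def)
    qed
    then show "y = 0" using nd y unfolding nondegenerate_on_def U'_def by auto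
  qed
  moreover have "\<forall>y\<in>U'. J y \<in> U'"
    using JU by (auto simp: U'_def g_J_swap)
  ultimately show "holomorphic_nondeg_subspace g J U'"
    using sub' by (simp add: holomorphic_nondeg_subspace_iff)
  have "u \<notin> U'" using u by (simp add: U'_def)
  then have "U' \<subset> U" using u(1) unfolding U'_def by blast
  then show "dim U' < dim U"
    using dim_psubset[of U' U] sub sub' by (metis span_eq_iff)
qed

lemma exists_J_adapted_orthonormal_set:
  assumes "holomorphic_nondeg_subspace g J U"
  shows "\<exists>B. finite B \<and> B \<subseteq> U \<and> span B = U \<and> pairwise (\<lambda>b c. g b c = 0) B
           \<and> (\<forall>b\<in>B. g b b = 1 \<or> g b b = -1) \<and> (\<forall>b\<in>B. g (J b) b = 0)"
  using assms
proof (induction "dim U" arbitrary: U rule: less_induct)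
  case less
  note U = less.prems
  have sub: "subspace U" using U by (simp add: holomorphic_nondeg_subspace_iff)
  show ?case
  proof (cases "U = {0}")
    case True
    then show ?thesis by (intro exI[of _ "{}"]) auto
  next
    case False
    obtain u where u: "u \<in> U" "g u u = 1" "g u (J u) = 0"
      using exists_J_unit_vector[OF U False] by blast
    define U' where "U' = {y\<in>U. g y u = 0 \<and> g y (J u) = 0}"
    note U' = J_orthogonal_complement[OF U u, folded U'_def]
    obtain B' where B': "finite B'" "B' \<subseteq> U'" "span B' = U'" "pairwise (\<lambda>b c. g b c = 0) B'"
      "\<forall>b\<in>B'. g b b = 1 \<or> g b b = -1" "\<forall>b\<in>B'. g (J b) b = 0"
      using less.hyps[OF U'(3) U'(1)] by blast
    define B where "B = insert u (insert (J u) B')"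
    have Ju: "J u \<in> U" using U u(1) by (simp add: holomorphic_nondeg_subspace_iff)
    have BU: "B \<subseteq> U" using B'(2) u(1) Ju unfolding B_def U'_def by auto
    have "U \<subseteq> span B"
    proof
      fix x assume x: "x \<in> U"
      have p: "x - g x u *\<^sub>R u + g x (J u) *\<^sub>R J u \<in> span B"
        using U'(2)[OF x] B'(3) span_mono[of B' B] unfolding B_def by auto
      have "u \<in> span B" "J u \<in> span B" unfolding B_def by (auto intro: span_base)
      from span_diff[OF span_add[OF p span_scale[OF this(1), of "g x u"]] span_scale[OF this(2), of "g x (J u)"]]
      show "x \<in> span B" by simp
    qed
    then have "span B = U" using BU sub by (simp add: span_minimal subset_antisym)
    moreover have "g b u = 0" "g u b = 0" "g b (J u) = 0" "g (J u) b = 0" if "b \<in> B'" for b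
      using that B'(2) g_sym[of b] unfolding U'_def by auto
    moreover have "g (J u) u = 0" using u(3) g_sym[of u] by simp
    ultimately show ?thesis
      using B' BU u unfolding B_def
      by (intro exI[of _ "insert u (insert (J u) B')"]) (auto simp: pairwise_insert)
  qed
qed

lemma pseudo_orthogonal_independent:
  assumes fin: "finite B" and orth: "pairwise (\<lambda>b c. g b c = 0) B" and nonnull: "\<forall>b\<in>B. g b b \<noteq> 0"
  shows "independent B"
  unfolding independent_explicit
proof (intro conjI allI impI ballI fin)
  fix c v assume comb: "(\<Sum>w\<in>B. c w *\<^sub>R w) = 0" and v: "v \<in> B"
  have "0 = g (\<Sum>w\<in>B. c w *\<^sub>R w) v" using comb by simp
  also have "\<dots> = (\<Sum>w\<in>B. c w * g w v)" by (simp add: g_sum_left)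
  also have "\<dots> = c v * g v v + (\<Sum>w\<in>B - {v}. c w * g w v)" by (rule sum.remove[OF fin v])
  also have "(\<Sum>w\<in>B - {v}. c w * g w v) = 0"
    using orth v by (intro sum.neutral) (auto simp: pairwise_def)
  finally show "c v = 0" using nonnull v by simp
qed

lemma exists_J_adapted_pob:
  assumes "holomorphic_nondeg_subspace g J U"
  obtains e where "pseudo_orthonormal_basis g U e" "\<forall>i<dim U. g (J (e i)) (e i) = 0"
proof -
  obtain B where B: "finite B" "B \<subseteq> U" "span B = U" "pairwise (\<lambda>b c. g b c = 0) B"
     "\<forall>b\<in>B. g b b = 1 \<or> g b b = -1" "\<forall>b\<in>B. g (J b) b = 0"
    using exists_J_adapted_orthonormal_set[OF assms] by blast
  have "independent B" using pseudo_orthogonal_independent[OF B(1) B(4)] B(5) by force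
  then have dim: "dim U = card B" using dim_span_eq_card_independent B(3) by metis
  obtain e where e: "bij_betw e {..<dim U} B"
    using ex_bij_betw_nat_finite[OF B(1)] by (auto simp: dim atLeast0LessThan)
  then have eB: "e i \<in> B" if "i < dim U" for i using that by (auto dest: bij_betwE)
  have "pseudo_orthonormal_basis g U e"
    unfolding pseudo_orthonormal_basis_def
  proof (intro conjI allI impI)
    show "span (e ` {..<dim U}) = U" using e B(3) by (simp add: bij_betw_def)
  next
    fix i j assume "i < dim U" "j < dim U" "i \<noteq> j"
    then show "g (e i) (e j) = 0"
      using e eB B(4) unfolding bij_betw_def inj_on_def pairwise_def by blast
  qed (use eB B(2) B(5) in auto)
  then show ?thesis using that eB B(6) by blast
qed

lemma pob_subspace: "pseudo_orthonormal_basis g U e \<Longrightarrow> subspace U"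
  unfolding pseudo_orthonormal_basis_def by (metis subspace_span)

lemma pob_sign_square:
  "pseudo_orthonormal_basis g U e \<Longrightarrow> i < dim U \<Longrightarrow> g (e i) (e i) * g (e i) (e i) = 1"
  unfolding pseudo_orthonormal_basis_def by auto

definition representing_vector :: "'v set \<Rightarrow> (nat \<Rightarrow> 'v) \<Rightarrow> ('v \<Rightarrow> real) \<Rightarrow> 'v" where
  "representing_vector U e f = (\<Sum>i<dim U. (g (e i) (e i) * f (e i)) *\<^sub>R e i)"

lemma representing_vector_in:
  "pseudo_orthonormal_basis g U e \<Longrightarrow> representing_vector U e f \<in> U"
  unfolding representing_vector_def using pob_subspace
  by (intro subspace_sum) (auto simp: pseudo_orthonormal_basis_def subspace_scale)

lemma g_representing_vector_basis:
  assumes e: "pseudo_orthonormal_basis g U e" and j: "j < dim U"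
  shows "g (representing_vector U e f) (e j) = f (e j)"
proof -
  have "g (representing_vector U e f) (e j) = (\<Sum>i<dim U. g (e i) (e i) * f (e i) * g (e i) (e j))"
    by (simp add: representing_vector_def g_sum_left)
  also have "\<dots> = (\<Sum>i<dim U. if i = j then f (e j) else 0)"
    using e j pob_sign_square[OF e] unfolding pseudo_orthonormal_basis_def
    by (intro sum.cong) (auto simp: algebra_simps)
  finally show ?thesis using j by simp
qed

lemma g_representing_vector:
  assumes e: "pseudo_orthonormal_basis g U e"
    and add: "\<And>y z. y \<in> U \<Longrightarrow> z \<in> U \<Longrightarrow> f (y + z) = f y + f z"
    and scale: "\<And>c y. y \<in> U \<Longrightarrow> f (c *\<^sub>R y) = c * f y"
    and y: "y \<in> U"
  shows "g (representing_vector U e f) y = f y"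
proof -
  define T where "T = {y\<in>U. g (representing_vector U e f) y = f y}"
  have sub: "subspace U" using pob_subspace[OF e] .
  have "f 0 = 0" using scale[of 0 0] subspace_0[OF sub] by simp
  then have "subspace T"
    using sub add scale unfolding T_def subspace_def by auto
  moreover have "e ` {..<dim U} \<subseteq> T"
    using g_representing_vector_basis[OF e] e unfolding T_def pseudo_orthonormal_basis_def by auto
  ultimately have "span (e ` {..<dim U}) \<subseteq> T" by (rule span_minimal[rotated])
  then show ?thesis using e y unfolding T_def pseudo_orthonormal_basis_def by auto
qed

lemma nondegenerate_on_eqI:
  assumes "subspace U" "nondegenerate_on g U" "z \<in> U" "z' \<in> U" "\<forall>y\<in>U. g z y = g z' y"
  shows "z = z'"
proof -
  have "z - z' \<in> U" using assms(1,3,4) by (rule subspace_diff)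
  moreover have "\<forall>y\<in>U. g (z - z') y = 0" using assms(5) by simp
  ultimately show ?thesis using assms(2) unfolding nondegenerate_on_def by auto
qed

lemma the_representing_vector:
  assumes e: "pseudo_orthonormal_basis g U e" and nd: "nondegenerate_on g U"
    and add: "\<And>y z. y \<in> U \<Longrightarrow> z \<in> U \<Longrightarrow> f (y + z) = f y + f z"
    and scale: "\<And>c y. y \<in> U \<Longrightarrow> f (c *\<^sub>R y) = c * f y"
  shows "(THE z. z \<in> U \<and> (\<forall>y\<in>U. g z y = f y)) = representing_vector U e f"
proof (rule the_equality)
  show "representing_vector U e f \<in> U \<and> (\<forall>y\<in>U. g (representing_vector U e f) y = f y)"
    using representing_vector_in[OF e] g_representing_vector[OF e add scale] by blast
next
  fix z assume "z \<in> U \<and> (\<forall>y\<in>U. g z y = f y)"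
  then show "z = representing_vector U e f"
    using nondegenerate_on_eqI[OF pob_subspace[OF e] nd] representing_vector_in[OF e]
      g_representing_vector[OF e add scale] by metis
qed

lemma representing_vector_g:
  assumes e: "pseudo_orthonormal_basis g U e" and nd: "nondegenerate_on g U" and v: "v \<in> U"
  shows "representing_vector U e (g v) = v"
  using nondegenerate_on_eqI[OF pob_subspace[OF e] nd representing_vector_in[OF e] v]
    g_representing_vector[OF e] by simp

lemma g_pob_expansion:
  assumes e: "pseudo_orthonormal_basis g U e" and nd: "nondegenerate_on g U" and u: "u \<in> U"
  shows "g u w = (\<Sum>i<dim U. g (e i) (e i) * g u (e i) * g (e i) w)"
proof -
  have "g u w = g (representing_vector U e (g u)) w" using representing_vector_g[OF assms] by simp
  then show ?thesis by (simp add: representing_vector_def g_sum_left)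
qed

lemma J_trace_pob_invariant:
  assumes U: "holomorphic_nondeg_subspace g J U"
    and e: "pseudo_orthonormal_basis g U e" and f: "pseudo_orthonormal_basis g U f"
  shows "(\<Sum>i<dim U. g (e i) (e i) * g (J (e i)) (e i)) = (\<Sum>j<dim U. g (f j) (f j) * g (J (f j)) (f j))"
proof -
  have JU: "\<forall>x\<in>U. J x \<in> U" and nd: "nondegenerate_on g U"
    using U by (auto simp: holomorphic_nondeg_subspace_iff)
  have eU: "e i \<in> U" and fU: "f i \<in> U" if "i < dim U" for i
    using e f that by (auto simp: pseudo_orthonormal_basis_def)
  have "(\<Sum>i<dim U. g (e i) (e i) * g (J (e i)) (e i)) =
    (\<Sum>i<dim U. g (e i) (e i) * (\<Sum>j<dim U. g (f j) (f j) * g (J (e i)) (f j) * g (f j) (e i)))"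
    using g_pob_expansion[OF f nd] eU JU by (intro sum.cong refl) auto
  also have "\<dots> = (\<Sum>i<dim U. \<Sum>j<dim U. g (f j) (f j) * (g (e i) (e i) * g (J (f j)) (e i) * g (e i) (f j)))"
    by (simp add: sum_distrib_left g_J_swap g_sym[of "e _" "J (f _)"] g_sym[of "f _" "e _"] mult_ac)
  also have "\<dots> = (\<Sum>j<dim U. g (f j) (f j) * (\<Sum>i<dim U. g (e i) (e i) * g (J (f j)) (e i) * g (e i) (f j)))"
    by (subst sum.swap) (simp add: sum_distrib_left)
  also have "\<dots> = (\<Sum>j<dim U. g (f j) (f j) * g (J (f j)) (f j))"
    using g_pob_expansion[OF e nd] fU JU by (intro sum.cong refl) auto
  finally show ?thesis .
qed

lemma J_trace_pob_eq_0:
  assumes U: "holomorphic_nondeg_subspace g J U" and e: "pseudo_orthonormal_basis g U e"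
  shows "(\<Sum>i<dim U. g (e i) (e i) * g (J (e i)) (e i)) = 0"
proof -
  obtain f where f: "pseudo_orthonormal_basis g U f" "\<forall>i<dim U. g (J (f i)) (f i) = 0"
    using exists_J_adapted_pob[OF U] by blast
  show ?thesis using J_trace_pob_invariant[OF U e f(1)] f(2) by simp
qed

end

locale holomorphic_hypersurface = norden g J
  for g :: "'v::euclidean_space \<Rightarrow> 'v \<Rightarrow> real" and J +
  fixes W :: "'v set" and \<sigma> :: "'v \<Rightarrow> 'v \<Rightarrow> 'v"
  assumes holomorphic_W: "holomorphic_nondeg_subspace g J W"
    and codim_2: "DIM('v) = dim W + 2"
    and second_fundamental_form: "second_fundamental_form g J W \<sigma>"
begin

lemma subspace_W: "subspace W"
  using holomorphic_W by (simp add: holomorphic_nondeg_subspace_iff)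

lemma J_in_W: "x \<in> W \<Longrightarrow> J x \<in> W"
  using holomorphic_W by (simp add: holomorphic_nondeg_subspace_iff)

lemma nondegenerate_W: "nondegenerate_on g W"
  using holomorphic_W by (simp add: holomorphic_nondeg_subspace_iff)

lemma bilinear_on_sigma: "bilinear_on W \<sigma>"
  using second_fundamental_form by (simp add: second_fundamental_form_def)

lemma sigma_add_right:
  assumes "x \<in> W" "y \<in> W" "z \<in> W"
  shows "\<sigma> x (y + z) = \<sigma> x y + \<sigma> x z"
proof -
  have "\<sigma> x (1 *\<^sub>R y + 1 *\<^sub>R z) = 1 *\<^sub>R \<sigma> x y + 1 *\<^sub>R \<sigma> x z"
    using bilinear_on_sigma assms unfolding bilinear_on_def by blast
  then show ?thesis by simp
qed

lemma sigma_scale_right: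
  assumes "x \<in> W" "y \<in> W"
  shows "\<sigma> x (c *\<^sub>R y) = c *\<^sub>R \<sigma> x y"
proof -
  have "\<sigma> x (c *\<^sub>R y + 0 *\<^sub>R y) = c *\<^sub>R \<sigma> x y + 0 *\<^sub>R \<sigma> x y"
    using bilinear_on_sigma assms unfolding bilinear_on_def by blast
  then show ?thesis by simp
qed

lemma sigma_normal: "x \<in> W \<Longrightarrow> y \<in> W \<Longrightarrow> normal_to g W (\<sigma> x y)"
  using second_fundamental_form by (simp add: second_fundamental_form_def)

lemma sigma_J_right: "x \<in> W \<Longrightarrow> y \<in> W \<Longrightarrow> \<sigma> x (J y) = J (\<sigma> x y)"
  using second_fundamental_form by (simp add: second_fundamental_form_def)

lemma g_shape_operator:
  assumes x: "x \<in> W" and y: "y \<in> W"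
  shows "g (shape_operator g W \<sigma> \<eta> x) y = g (\<sigma> x y) \<eta>"
proof -
  obtain e where e: "pseudo_orthonormal_basis g W e"
    using exists_J_adapted_pob[OF holomorphic_W] by blast
  have add: "g (\<sigma> x (y + z)) \<eta> = g (\<sigma> x y) \<eta> + g (\<sigma> x z) \<eta>" if "y \<in> W" "z \<in> W" for y z
    using sigma_add_right[OF x that] by simp
  have scale: "g (\<sigma> x (c *\<^sub>R y)) \<eta> = c * g (\<sigma> x y) \<eta>" if "y \<in> W" for c y
    using sigma_scale_right[OF x that] by simp
  have "shape_operator g W \<sigma> \<eta> x = representing_vector W e (\<lambda>y. g (\<sigma> x y) \<eta>)"
    unfolding shape_operator_def
    by (rule the_representing_vector[OF e nondegenerate_W]) (simp_all add: add scale)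
  then show ?thesis
    using g_representing_vector[OF e, of "\<lambda>y. g (\<sigma> x y) \<eta>"] add scale y by simp
qed

lemma subspace_normal: "subspace (Collect (normal_to g W))"
  unfolding subspace_def normal_to_def by simp

lemma normal_to_J: "normal_to g W v \<Longrightarrow> normal_to g W (J v)"
  unfolding normal_to_def using J_in_W by (simp add: g_J_swap)

lemma normal_decomposition:
  obtains w m where "w \<in> W" "normal_to g W m" "u = w + m"
proof -
  obtain e where e: "pseudo_orthonormal_basis g W e"
    using exists_J_adapted_pob[OF holomorphic_W] by blast
  define w where "w = representing_vector W e (g u)"
  have "w \<in> W" using representing_vector_in[OF e] by (simp add: w_def)
  moreover have "normal_to g W (u - w)"
    using g_representing_vector[OF e] by (simp add: normal_to_def w_def g_sym[of u])
  ultimately show ?thesis using that[of w "u - w"] by simp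
qed

lemma dim_normal_space: "dim (Collect (normal_to g W)) = 2"
proof -
  have "W \<inter> Collect (normal_to g W) = {0}"
    using nondegenerate_W subspace_0[OF subspace_W]
    by (auto simp: nondegenerate_on_def normal_to_def)
  moreover have "{x + y |x y. x \<in> W \<and> y \<in> Collect (normal_to g W)} = UNIV"
  proof (rule UNIV_eq_I[symmetric])
    fix u
    obtain w m where "w \<in> W" "normal_to g W m" "u = w + m" using normal_decomposition .
    then show "u \<in> {x + y |x y. x \<in> W \<and> y \<in> Collect (normal_to g W)}" by blast
  qed
  ultimately show ?thesis
    using dim_sums_Int[OF subspace_W subspace_normal] codim_2 by (simp add: dim_UNIV)
qed

lemma normal_space_span:
  assumes \<eta>: "\<eta> \<noteq> 0" "normal_to g W \<eta>" and v: "normal_to g W v"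
  shows "v \<in> span {\<eta>, J \<eta>}"
proof -
  have "\<eta> \<notin> span {J \<eta>}"
  proof
    assume "\<eta> \<in> span {J \<eta>}"
    then obtain k where k: "\<eta> = k *\<^sub>R J \<eta>" by (auto simp: span_singleton)
    then have "J \<eta> = - (k *\<^sub>R \<eta>)" by (metis J_J J_scale scaleR_minus_right)
    with k have "\<eta> = - ((k * k) *\<^sub>R \<eta>)" by simp
    then have "(1 + k * k) *\<^sub>R \<eta> = 0" by (simp add: scaleR_add_left eq_neg_iff_add_eq_0)
    moreover have "1 + k * k \<noteq> 0" using zero_le_square[of k] by linarith
    ultimately show False using \<eta>(1) by simp
  qed
  moreover have "J \<eta> \<noteq> 0" using \<eta>(1) J_J[of \<eta>] by force
  ultimately have "independent {\<eta>, J \<eta>}" "card {\<eta>, J \<eta>} = 2"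
    using span_base[of "J \<eta>" "{J \<eta>}"] by (auto simp: independent_insert card_insert_if)
  moreover have "{\<eta>, J \<eta>} \<subseteq> Collect (normal_to g W)" using \<eta>(2) normal_to_J by simp
  ultimately have "Collect (normal_to g W) \<subseteq> span {\<eta>, J \<eta>}"
    using card_ge_dim_independent dim_normal_space by (metis order_refl)
  then show ?thesis using v by blast
qed

lemma normal_eq_0:
  assumes \<eta>: "\<eta> \<noteq> 0" "normal_to g W \<eta>"
    and v: "normal_to g W v" "g v \<eta> = 0" "g v (J \<eta>) = 0"
  shows "v = 0"
proof (rule g_nondegenerate)
  fix u
  obtain w m where wm: "w \<in> W" "normal_to g W m" "u = w + m"
    using normal_decomposition by blast
  have "g v m = 0"
    using linear_eq_0_on_span[OF linear_g, of "{\<eta>, J \<eta>}" v] normal_space_span[OF \<eta> wm(2)] v by auto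
  then show "g v u = 0" using v(1) wm by (simp add: normal_to_def)
qed

lemma umbilical_if_shape_operator_complex_scalar:
  assumes \<eta>: "\<eta> \<noteq> 0" "normal_to g W \<eta>"
    and A: "\<forall>x\<in>W. shape_operator g W \<sigma> \<eta> x = \<alpha> *\<^sub>R x - \<beta> *\<^sub>R J x"
    and nontrivial: "W \<noteq> {0}"
  obtains Z where "\<forall>x\<in>W. \<forall>y\<in>W. \<sigma> x y = g x y *\<^sub>R Z - g (J x) y *\<^sub>R J Z"
proof -
  have pair_\<eta>: "g (\<sigma> x y) \<eta> = \<alpha> * g x y - \<beta> * g (J x) y" if "x \<in> W" "y \<in> W" for x y
    using g_shape_operator[OF that, of \<eta>] A that by simp
  have pair_J\<eta>: "g (\<sigma> x y) (J \<eta>) = \<alpha> * g (J x) y + \<beta> * g x y" if x: "x \<in> W" and y: "y \<in> W" for x y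
  proof -
    have "g (\<sigma> x y) (J \<eta>) = g (\<sigma> x (J y)) \<eta>" using sigma_J_right[OF x y] by (simp add: g_J_swap)
    also have "\<dots> = \<alpha> * g (J x) y + \<beta> * g x y"
      using pair_\<eta>[OF x J_in_W[OF y]] by (simp add: g_J_swap)
    finally show ?thesis .
  qed
  obtain u where u: "u \<in> W" "g u u = 1" "g u (J u) = 0"
    using exists_J_unit_vector[OF holomorphic_W nontrivial] by blast
  define Z where "Z = \<sigma> u u"
  have Z: "g Z \<eta> = \<alpha>" "g (J Z) \<eta> = \<beta>"
    using pair_\<eta>[OF u(1) u(1)] pair_J\<eta>[OF u(1) u(1)] u g_sym[of "J u" u]
    by (simp_all add: Z_def g_J_swap)
  have "\<sigma> x y = g x y *\<^sub>R Z - g (J x) y *\<^sub>R J Z" if x: "x \<in> W" and y: "y \<in> W" for x y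
  proof -
    define D where "D = \<sigma> x y - g x y *\<^sub>R Z + g (J x) y *\<^sub>R J Z"
    have "normal_to g W Z" using sigma_normal[OF u(1) u(1)] by (simp add: Z_def)
    then have "normal_to g W D"
      using sigma_normal[OF x y] normal_to_J unfolding D_def normal_to_def by simp
    moreover have "g D \<eta> = 0" "g D (J \<eta>) = 0"
      using pair_\<eta>[OF x y] pair_J\<eta>[OF x y] Z by (simp_all add: D_def g_J_swap[of Z])
    ultimately have "D = 0" using normal_eq_0[OF \<eta>] by blast
    then show ?thesis by (simp add: D_def algebra_simps)
  qed
  then show ?thesis using that by blast
qed

lemma mean_curvature_umbilical:
  assumes nontrivial: "W \<noteq> {0}"
    and umbilical: "\<forall>x\<in>W. \<forall>y\<in>W. \<sigma> x y = g x y *\<^sub>R Z - g (J x) y *\<^sub>R J Z"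
  shows "mean_curvature g W \<sigma> = Z"
proof -
  define e where "e = (SOME e. pseudo_orthonormal_basis g W e)"
  have e: "pseudo_orthonormal_basis g W e"
    unfolding e_def using exists_J_adapted_pob[OF holomorphic_W] by (metis someI)
  have eW: "e i \<in> W" if "i < dim W" for i using e that by (simp add: pseudo_orthonormal_basis_def)
  have "trace_g g W \<sigma> = (\<Sum>i<dim W. g (e i) (e i) *\<^sub>R \<sigma> (e i) (e i))"
    by (simp add: trace_g_def e_def Let_def)
  also have "\<dots> = (\<Sum>i<dim W. (g (e i) (e i) * g (e i) (e i)) *\<^sub>R Z
                  - (g (e i) (e i) * g (J (e i)) (e i)) *\<^sub>R J Z)"
    using umbilical eW by (intro sum.cong refl) (simp add: scaleR_diff_right)
  also have "\<dots> = real (dim W) *\<^sub>R Z"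
    using pob_sign_square[OF e] J_trace_pob_eq_0[OF holomorphic_W e]
    by (simp add: sum_subtractf scaleR_sum_left[symmetric] sum_constant_scaleR)
  finally have "trace_g g W \<sigma> = real (dim W) *\<^sub>R Z" .
  moreover have "dim W \<noteq> 0" using nontrivial subspace_0[OF subspace_W] dim_eq_0 by blast
  ultimately show ?thesis by (simp add: mean_curvature_def)
qed

end

theorem lemma2p5:
  fixes g :: "'v::euclidean_space \<Rightarrow> 'v \<Rightarrow> real" and J :: "'v \<Rightarrow> 'v"
    and W :: "'v set" and \<sigma> :: "'v \<Rightarrow> 'v \<Rightarrow> 'v" and n :: nat
  assumes "DIM('v) = 2 * n + 2"
    and "norden_space g J"
    and "holomorphic_nondeg_subspace g J W"
    and "dim W = 2 * n"
    and "second_fundamental_form g J W \<sigma>"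
    and "\<exists>\<eta>. \<eta> \<noteq> 0 \<and> normal_to g W \<eta> \<and>
           (\<forall>x\<in>W. shape_operator g W \<sigma> \<eta> x =
              (trace_on W (shape_operator g W \<sigma> \<eta>) / (2 * real n)) *\<^sub>R x
              - (trace_on W (shape_operator g W \<sigma> \<eta> \<circ> J) / (2 * real n)) *\<^sub>R J x)"
  shows "\<forall>x\<in>W. \<forall>y\<in>W. \<sigma> x y = g x y *\<^sub>R mean_curvature g W \<sigma>
                         - assoc_metric g J x y *\<^sub>R J (mean_curvature g W \<sigma>)"
proof -
  interpret holomorphic_hypersurface g J W \<sigma>
    using assms(1-5) by unfold_locales simp_all
  show ?thesis
  proof (cases "W = {0}")
    case True
    then show ?thesis using sigma_scale_right[of 0 0 0] by (simp add: assoc_metric_def)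
  next
    case False
    obtain Z where Z: "\<forall>x\<in>W. \<forall>y\<in>W. \<sigma> x y = g x y *\<^sub>R Z - g (J x) y *\<^sub>R J Z"
      using umbilical_if_shape_operator_complex_scalar[OF _ _ _ False] assms(6) by metis
    then show ?thesis using mean_curvature_umbilical[OF False Z] by (simp add: assoc_metric_def)
  qed
qed

end
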